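(* Let $(X,d_X)$ be a flexible locally compact noncompact Polish space, and let $(Y,d_Y)$ be a locally compact Polish space containing a nonempty compact clopen subset $Z$. Equip $X\times Y$ with the metric $d((x,y),(x',y'))=\max(d_X(x,x'),d_Y(y,y'))$. Then $(X\times Y,d)$ is flexible; indeed, if the sets $Y_n$ and homeomorphisms $\phi_{n,m}$ witness flexibility of $X$, then the sets $Y_n\times Z$ and homeomorphisms $\phi_{n,m}\times\mathrm{id}_Z$ witness flexibility of $X\times Y$. In particular, if $Y$ is a nonempty compact Polish space then $X\times Y$ is flexible.
   Context: For closed $W$ in a space $S$ with metric $\rho$, $\partial_S W=W\cap\overline{S\setminus W}$ and $\mathrm{Homeo}_{\partial}(W)$ is the group of homeomorphisms of $W$ fixing each point of $\partial_S W$; such $\phi$ extends to a homeomorphism $\tilde\phi$ of $S$ equal to the identity off $W$, with radius $r(\phi)=\sup_{s\in S}\rho(s,\tilde\phi(s))$. A locally compact noncompact Polish space $S$ with compatible metric $\rho$ is flexible if there are pairwise disjoint sets $W_n\subseteq S$ and $\phi_{n,m}\in\mathrm{Homeo}_\partial(W_n)$ ($n,m\in\mathbb N$) such that: (1) each $W_n$ is compact and no compact subset of $S$ meets infinitely many $W_n$; (2) for each $n$, $(r(\phi_{n,m}))_m$ is decreasing and tends to $0$, and $r(\phi_{n,m})\ne0$ for all $n,m$. *)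

theory Defs
  imports "HOL-Analysis.Analysis"
begin

definition Polish_top :: "'a topology \<Rightarrow> bool" where
  "Polish_top T \<longleftrightarrow> completely_metrizable_space T \<and> separable_space T"

definition bdry_in :: "'a set \<Rightarrow> ('a \<Rightarrow> 'a \<Rightarrow> real) \<Rightarrow> 'a set \<Rightarrow> 'a set" where
  "bdry_in M d W = W \<inter> (Metric_space.mtopology M d closure_of (M - W))"

definition Homeo_bd :: "'a set \<Rightarrow> ('a \<Rightarrow> 'a \<Rightarrow> real) \<Rightarrow> 'a set \<Rightarrow> ('a \<Rightarrow> 'a) set" where
  "Homeo_bd M d W = {\<phi>. homeomorphic_map (subtopology (Metric_space.mtopology M d) W)
                                          (subtopology (Metric_space.mtopology M d) W) \<phi>
                        \<and> (\<forall>s\<in>bdry_in M d W. \<phi> s = s)}"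

definition ext_id :: "'a set \<Rightarrow> ('a \<Rightarrow> 'a) \<Rightarrow> 'a \<Rightarrow> 'a" where
  "ext_id W \<phi> s = (if s \<in> W then \<phi> s else s)"

definition radius :: "'a set \<Rightarrow> ('a \<Rightarrow> 'a \<Rightarrow> real) \<Rightarrow> 'a set \<Rightarrow> ('a \<Rightarrow> 'a) \<Rightarrow> real" where
  "radius M d W \<phi> = (SUP s\<in>M. d s (ext_id W \<phi> s))"

definition flex_witness :: "'a set \<Rightarrow> ('a \<Rightarrow> 'a \<Rightarrow> real) \<Rightarrow> (nat \<Rightarrow> 'a set) \<Rightarrow> (nat \<Rightarrow> nat \<Rightarrow> 'a \<Rightarrow> 'a) \<Rightarrow> bool" where
  "flex_witness M d W \<phi> \<longleftrightarrow>
     disjoint_family W \<and>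
     (\<forall>n. W n \<subseteq> M \<and> compactin (Metric_space.mtopology M d) (W n)) \<and>
     (\<forall>K. compactin (Metric_space.mtopology M d) K \<longrightarrow> finite {n. K \<inter> W n \<noteq> {}}) \<and>
     (\<forall>n m. \<phi> n m \<in> Homeo_bd M d (W n)) \<and>
     (\<forall>n. decseq (\<lambda>m. radius M d (W n) (\<phi> n m))) \<and>
     (\<forall>n. (\<lambda>m. radius M d (W n) (\<phi> n m)) \<longlonglongrightarrow> 0) \<and>
     (\<forall>n m. radius M d (W n) (\<phi> n m) \<noteq> 0)"

definition flexible :: "'a set \<Rightarrow> ('a \<Rightarrow> 'a \<Rightarrow> real) \<Rightarrow> bool" where
  "flexible M d \<longleftrightarrow> Metric_space M d \<and>
     locally_compact_space (Metric_space.mtopology M d) \<and>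
     \<not> compact_space (Metric_space.mtopology M d) \<and>
     Polish_top (Metric_space.mtopology M d) \<and>
     (\<exists>W \<phi>. flex_witness M d W \<phi>)"

definition max_dist :: "('a \<Rightarrow> 'a \<Rightarrow> real) \<Rightarrow> ('b \<Rightarrow> 'b \<Rightarrow> real) \<Rightarrow> 'a \<times> 'b \<Rightarrow> 'a \<times> 'b \<Rightarrow> real" where
  "max_dist d1 d2 = (\<lambda>(x,y) (x',y'). max (d1 x x') (d2 y y'))"

end

theory Submission
  imports Defs
begin

text \<open>A ball for the max metric is the product of the balls of the factors, so the max metric
induces the product topology. If \<open>Z\<close> is open, the boundary of \<open>W \<times> Z\<close> lies over the boundary
of \<open>W\<close>, hence \<open>\<phi> \<times> id\<^sub>Z\<close> fixes it. The displacement of \<open>\<phi> \<times> id\<^sub>Z\<close> at \<open>(x, y)\<close> is that of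
\<open>\<phi>\<close> at \<open>x\<close> when \<open>y \<in> Z\<close> and \<open>0\<close> otherwise; since the compact \<open>W\<close> is not all of the noncompact
\<open>X\<close>, the value \<open>0\<close> is also a displacement of \<open>\<phi>\<close>, so the radii agree. A compact subset of the
product projects to a compact subset of \<open>X\<close>, which meets only finitely many \<open>W n\<close>.\<close>

lemma Metric_space_max_dist:
  assumes "Metric_space X dX" and "Metric_space Y dY"
  shows "Metric_space (X \<times> Y) (max_dist dX dY)"
proof
  interpret X: Metric_space X dX by fact
  interpret Y: Metric_space Y dY by fact
  fix p q r
  show "0 \<le> max_dist dX dY p q"
    by (auto simp: max_dist_def case_prod_unfold max_def)
  show "max_dist dX dY p q = max_dist dX dY q p"
    by (simp add: max_dist_def case_prod_unfold X.commute Y.commute)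
  show "p \<in> X \<times> Y \<Longrightarrow> q \<in> X \<times> Y \<Longrightarrow> max_dist dX dY p q = 0 \<longleftrightarrow> p = q"
    using X.nonneg Y.nonneg X.zero Y.zero
    by (auto simp: max_dist_def case_prod_unfold prod_eq_iff max_def dest: order_antisym)
  show "p \<in> X \<times> Y \<Longrightarrow> q \<in> X \<times> Y \<Longrightarrow> r \<in> X \<times> Y \<Longrightarrow>
      max_dist dX dY p r \<le> max_dist dX dY p q + max_dist dX dY q r"
    using X.triangle[of "fst p" "fst q" "fst r"] Y.triangle[of "snd p" "snd q" "snd r"]
      X.nonneg Y.nonneg
    by (auto simp: max_dist_def case_prod_unfold mem_Times_iff)
qed

lemma mball_max_dist:
  assumes "Metric_space X dX" and "Metric_space Y dY"
  shows "Metric_space.mball (X \<times> Y) (max_dist dX dY) (x, y) r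
       = Metric_space.mball X dX x r \<times> Metric_space.mball Y dY y r"
proof -
  interpret P: Metric_space "X \<times> Y" "max_dist dX dY"
    using Metric_space_max_dist[OF assms] .
  interpret X: Metric_space X dX by fact
  interpret Y: Metric_space Y dY by fact
  show ?thesis
    unfolding set_eq_iff P.in_mball X.in_mball Y.in_mball mem_Times_iff by (auto simp: max_dist_def)
qed

lemma mtopology_max_dist:
  assumes X: "Metric_space X dX" and Y: "Metric_space Y dY"
  shows "Metric_space.mtopology (X \<times> Y) (max_dist dX dY)
       = prod_topology (Metric_space.mtopology X dX) (Metric_space.mtopology Y dY)"
proof (rule topology_eq [THEN iffD2], intro allI iffI)
  interpret P: Metric_space "X \<times> Y" "max_dist dX dY"
    using Metric_space_max_dist[OF X Y] .
  interpret X: Metric_space X dX by fact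
  interpret Y: Metric_space Y dY by fact
  fix S
  show "openin (prod_topology X.mtopology Y.mtopology) S" if S: "openin P.mtopology S"
    unfolding openin_prod_topology_alt
  proof (intro allI impI)
    fix x y assume xy: "(x, y) \<in> S"
    then have "x \<in> X" "y \<in> Y"
      using openin_subset[OF S] by auto
    obtain r where "r > 0" and "P.mball (x, y) r \<subseteq> S"
      using S xy unfolding P.openin_mtopology by blast
    then have "X.mball x r \<times> Y.mball y r \<subseteq> S"
      by (simp only: mball_max_dist[OF X Y])
    then show "\<exists>U V. openin X.mtopology U \<and> openin Y.mtopology V \<and> x \<in> U \<and> y \<in> V \<and> U \<times> V \<subseteq> S"
      using \<open>r > 0\<close> \<open>x \<in> X\<close> \<open>y \<in> Y\<close>
      by (intro exI[of _ "X.mball x r"] exI[of _ "Y.mball y r"] conjI X.openin_mball Y.openin_mball) simp_all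
  qed
  show "openin P.mtopology S" if S: "openin (prod_topology X.mtopology Y.mtopology) S"
    unfolding P.openin_mtopology
  proof (intro conjI allI impI)
    show "S \<subseteq> X \<times> Y"
      using openin_subset[OF S] by simp
    fix p assume "p \<in> S"
    obtain x y where p: "p = (x, y)"
      by fastforce
    obtain U V where U: "openin X.mtopology U" "x \<in> U" and V: "openin Y.mtopology V" "y \<in> V"
      and UV: "U \<times> V \<subseteq> S"
      using S \<open>p \<in> S\<close> unfolding p openin_prod_topology_alt by blast
    obtain r1 where "r1 > 0" "X.mball x r1 \<subseteq> U"
      using U unfolding X.openin_mtopology by blast
    moreover obtain r2 where "r2 > 0" "Y.mball y r2 \<subseteq> V"
      using V unfolding Y.openin_mtopology by blast
    moreover have "X.mball x (min r1 r2) \<subseteq> X.mball x r1" "Y.mball y (min r1 r2) \<subseteq> Y.mball y r2"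
      by (simp_all add: X.mball_subset_concentric Y.mball_subset_concentric)
    ultimately have "P.mball p (min r1 r2) \<subseteq> S"
      unfolding p mball_max_dist[OF X Y] using UV by blast
    then show "\<exists>r>0. P.mball p r \<subseteq> S"
      using \<open>r1 > 0\<close> \<open>r2 > 0\<close> by (intro exI[of _ "min r1 r2"]) simp
  qed
qed

lemma separable_space_prod_topology:
  assumes "separable_space T1" and "separable_space T2"
  shows "separable_space (prod_topology T1 T2)"
proof -
  obtain C1 where "countable C1" "C1 \<subseteq> topspace T1" "T1 closure_of C1 = topspace T1"
    using assms(1) unfolding separable_space_def by blast
  moreover obtain C2 where "countable C2" "C2 \<subseteq> topspace T2" "T2 closure_of C2 = topspace T2"
    using assms(2) unfolding separable_space_def by blast
  ultimately show ?thesis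
    unfolding separable_space_def by (intro exI[of _ "C1 \<times> C2"]) (auto simp: closure_of_Times)
qed

lemma Polish_top_prod_topology:
  assumes "Polish_top T1" and "Polish_top T2"
  shows "Polish_top (prod_topology T1 T2)"
  using assms by (auto simp: Polish_top_def completely_metrizable_space_prod_topology
      separable_space_prod_topology)

lemma bdry_in_Times_openin_subset:
  assumes X: "Metric_space X dX" and Y: "Metric_space Y dY"
    and Z: "openin (Metric_space.mtopology Y dY) Z"
  shows "bdry_in (X \<times> Y) (max_dist dX dY) (W \<times> Z) \<subseteq> bdry_in X dX W \<times> Z"
proof -
  interpret X: Metric_space X dX by fact
  interpret Y: Metric_space Y dY by fact
  have "X \<times> Y - W \<times> Z = (X - W) \<times> Y \<union> X \<times> (Y - Z)"
    by auto
  moreover have "Y.mtopology closure_of (Y - Z) = Y - Z"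
    using Z by (simp add: closure_of_closedin openin_closedin_eq)
  ultimately show ?thesis
    unfolding bdry_in_def mtopology_max_dist[OF X Y] by (auto simp: closure_of_Un closure_of_Times)
qed

lemma Homeo_bd_Times_id:
  assumes X: "Metric_space X dX" and Y: "Metric_space Y dY"
    and Z: "openin (Metric_space.mtopology Y dY) Z"
    and \<phi>: "\<phi> \<in> Homeo_bd X dX W"
  shows "(\<lambda>(x, y). (\<phi> x, y)) \<in> Homeo_bd (X \<times> Y) (max_dist dX dY) (W \<times> Z)"
proof -
  let ?TW = "subtopology (Metric_space.mtopology X dX) W"
  let ?TZ = "subtopology (Metric_space.mtopology Y dY) Z"
  obtain \<psi> where "homeomorphic_maps ?TW ?TW \<phi> \<psi>"
    using \<phi> unfolding Homeo_bd_def homeomorphic_map_maps by blast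
  then have "homeomorphic_maps (prod_topology ?TW ?TZ) (prod_topology ?TW ?TZ)
      (\<lambda>(x, y). (\<phi> x, y)) (\<lambda>(x, y). (\<psi> x, y))"
    using homeomorphic_maps_prod[of ?TW ?TZ ?TW ?TZ \<phi> "\<lambda>y. y" \<psi> "\<lambda>y. y"]
      homeomorphic_maps_id[of ?TZ ?TZ]
    by (simp add: id_def)
  then have "homeomorphic_map (subtopology (Metric_space.mtopology (X \<times> Y) (max_dist dX dY)) (W \<times> Z))
      (subtopology (Metric_space.mtopology (X \<times> Y) (max_dist dX dY)) (W \<times> Z)) (\<lambda>(x, y). (\<phi> x, y))"
    unfolding mtopology_max_dist[OF X Y] subtopology_Times homeomorphic_map_maps by auto
  moreover have "\<forall>s\<in>bdry_in (X \<times> Y) (max_dist dX dY) (W \<times> Z). (\<lambda>(x, y). (\<phi> x, y)) s = s"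
    using bdry_in_Times_openin_subset[OF X Y Z] \<phi> unfolding Homeo_bd_def by fastforce
  ultimately show ?thesis
    unfolding Homeo_bd_def by blast
qed

lemma radius_Times_id:
  assumes X: "Metric_space X dX" and Y: "Metric_space Y dY"
    and "Z \<subseteq> Y" "Z \<noteq> {}" "W \<subseteq> X" "W \<noteq> X"
  shows "radius (X \<times> Y) (max_dist dX dY) (W \<times> Z) (\<lambda>(x, y). (\<phi> x, y)) = radius X dX W \<phi>"
proof -
  interpret X: Metric_space X dX by fact
  interpret Y: Metric_space Y dY by fact
  define f where "f p = max_dist dX dY p (ext_id (W \<times> Z) (\<lambda>(x, y). (\<phi> x, y)) p)" for p
  define g where "g x = dX x (ext_id W \<phi> x)" for x
  have f_in_Z: "f (x, y) = g x" if "x \<in> X" "y \<in> Z" for x y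
    using that subsetD[OF assms(3) that(2)] X.nonneg[of x "\<phi> x"]
    by (auto simp: f_def g_def ext_id_def max_dist_def max.absorb1)
  have f_off_Z: "f (x, y) = 0" if "x \<in> X" "y \<in> Y" "y \<notin> Z" for x y
    using that by (auto simp: f_def ext_id_def max_dist_def)
  obtain x0 where "x0 \<in> X" "x0 \<notin> W"
    using assms(5,6) by blast
  then have "g x0 = 0"
    by (simp add: g_def ext_id_def)
  obtain z0 where "z0 \<in> Z"
    using assms(4) by blast
  have "f ` (X \<times> Y) = g ` X"
  proof (intro equalityI subsetI)
    fix v assume "v \<in> f ` (X \<times> Y)"
    then obtain x y where "x \<in> X" "y \<in> Y" "v = f (x, y)"
      by auto
    then show "v \<in> g ` X"
      using f_in_Z f_off_Z \<open>g x0 = 0\<close> \<open>x0 \<in> X\<close> by (cases "y \<in> Z") auto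
  next
    fix v assume "v \<in> g ` X"
    then show "v \<in> f ` (X \<times> Y)"
      using f_in_Z \<open>z0 \<in> Z\<close> assms(3) by (force intro: image_eqI[of _ _ "(_, z0)"])
  qed
  then show ?thesis
    unfolding radius_def f_def g_def by simp
qed

lemma flex_witness_Times_id:
  assumes X: "Metric_space X dX" and Y: "Metric_space Y dY"
    and ncX: "\<not> compact_space (Metric_space.mtopology X dX)"
    and Zne: "Z \<noteq> {}" and Zc: "compactin (Metric_space.mtopology Y dY) Z"
    and Zo: "openin (Metric_space.mtopology Y dY) Z"
    and W: "flex_witness X dX W \<phi>"
  shows "flex_witness (X \<times> Y) (max_dist dX dY) (\<lambda>n. W n \<times> Z) (\<lambda>n m (x, y). (\<phi> n m x, y))"
proof -
  note mtop = mtopology_max_dist[OF X Y]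
  have ZY: "Z \<subseteq> Y"
    using compactin_subset_topspace[OF Zc] Metric_space.topspace_mtopology[OF Y] by simp
  from W have WX: "W n \<subseteq> X" and Wc: "compactin (Metric_space.mtopology X dX) (W n)"
    and hom: "\<phi> n m \<in> Homeo_bd X dX (W n)" for n m
    unfolding flex_witness_def by auto
  have "W n \<noteq> X" for n
    using Wc[of n] ncX by (auto simp: compact_space_def Metric_space.topspace_mtopology[OF X])
  then have rad: "radius (X \<times> Y) (max_dist dX dY) (W n \<times> Z) (\<lambda>(x, y). (\<phi> n m x, y))
      = radius X dX (W n) (\<phi> n m)" for n m
    using radius_Times_id[OF X Y ZY Zne WX] by blast
  have fin: "finite {n. K \<inter> (W n \<times> Z) \<noteq> {}}"
    if "compactin (Metric_space.mtopology (X \<times> Y) (max_dist dX dY)) K" for K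
  proof -
    have "compactin (Metric_space.mtopology X dX) (fst ` K)"
      using image_compactin[OF that[unfolded mtop] continuous_map_fst] .
    then have "finite {n. fst ` K \<inter> W n \<noteq> {}}"
      using W unfolding flex_witness_def by blast
    then show ?thesis
      by (rule finite_subset[rotated]) force
  qed
  have "disjoint_family (\<lambda>n. W n \<times> Z)"
    using W unfolding flex_witness_def disjoint_family_on_def by blast
  moreover have "compactin (Metric_space.mtopology (X \<times> Y) (max_dist dX dY)) (W n \<times> Z)" for n
    unfolding mtop compactin_Times using Wc Zc by blast
  ultimately show ?thesis
    using W WX ZY fin Homeo_bd_Times_id[OF X Y Zo hom]
    unfolding flex_witness_def rad by auto
qed

lemma flexible_prod_topology_properties:
  assumes flex: "flexible X dX" and Y: "Metric_space Y dY"
    and "Polish_top (Metric_space.mtopology Y dY)"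
    and "locally_compact_space (Metric_space.mtopology Y dY)" and "Y \<noteq> {}"
  shows "Metric_space (X \<times> Y) (max_dist dX dY)
     \<and> locally_compact_space (Metric_space.mtopology (X \<times> Y) (max_dist dX dY))
     \<and> \<not> compact_space (Metric_space.mtopology (X \<times> Y) (max_dist dX dY))
     \<and> Polish_top (Metric_space.mtopology (X \<times> Y) (max_dist dX dY))"
proof -
  have X: "Metric_space X dX"
    using flex unfolding flexible_def by blast
  have "X \<noteq> {}"
    using flex by (auto simp: flexible_def compact_space_def Metric_space.topspace_mtopology)
  then have "prod_topology (Metric_space.mtopology X dX) (Metric_space.mtopology Y dY) \<noteq> trivial_topology"
    using \<open>Y \<noteq> {}\<close> X Y by (simp flip: null_topspace_iff_trivial add: Metric_space.topspace_mtopology)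
  then show ?thesis
    using assms Metric_space_max_dist[OF X Y]
    by (auto simp: flexible_def mtopology_max_dist[OF X Y] locally_compact_space_prod_topology
        compact_space_prod_topology Polish_top_prod_topology)
qed

theorem mainTheorem9:
  fixes X :: "'a set" and dX :: "'a \<Rightarrow> 'a \<Rightarrow> real"
    and Y :: "'b set" and dY :: "'b \<Rightarrow> 'b \<Rightarrow> real"
  assumes flexX: "flexible X dX"
    and mY: "Metric_space Y dY"
    and polY: "Polish_top (Metric_space.mtopology Y dY)"
  shows "(locally_compact_space (Metric_space.mtopology Y dY) \<longrightarrow>
           (\<forall>Z. Z \<noteq> {} \<and> compactin (Metric_space.mtopology Y dY) Z
                \<and> openin (Metric_space.mtopology Y dY) Z
                \<and> closedin (Metric_space.mtopology Y dY) Z \<longrightarrow>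
              flexible (X \<times> Y) (max_dist dX dY) \<and>
              (\<forall>W \<phi>. flex_witness X dX W \<phi> \<longrightarrow>
                 flex_witness (X \<times> Y) (max_dist dX dY) (\<lambda>n. W n \<times> Z)
                   (\<lambda>n m (x, y). (\<phi> n m x, y)))))
       \<and> (Y \<noteq> {} \<and> compact_space (Metric_space.mtopology Y dY) \<longrightarrow>
            flexible (X \<times> Y) (max_dist dX dY))"
proof -
  have X: "Metric_space X dX" and ncX: "\<not> compact_space (Metric_space.mtopology X dX)"
    and "\<exists>W \<phi>. flex_witness X dX W \<phi>"
    using flexX unfolding flexible_def by auto
  have "flexible (X \<times> Y) (max_dist dX dY) \<and>
      (\<forall>W \<phi>. flex_witness X dX W \<phi> \<longrightarrow>
         flex_witness (X \<times> Y) (max_dist dX dY) (\<lambda>n. W n \<times> Z) (\<lambda>n m (x, y). (\<phi> n m x, y)))"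
    if "locally_compact_space (Metric_space.mtopology Y dY)" "Z \<noteq> {}"
      "compactin (Metric_space.mtopology Y dY) Z" "openin (Metric_space.mtopology Y dY) Z" for Z
  proof -
    have "Y \<noteq> {}"
      using that(2,3) compactin_subset_topspace Metric_space.topspace_mtopology[OF mY] by fastforce
    then show ?thesis
      using that flexible_prod_topology_properties[OF flexX mY polY] \<open>\<exists>W \<phi>. _\<close>
        flex_witness_Times_id[OF X mY ncX]
      unfolding flexible_def by blast
  qed
  moreover have "openin (Metric_space.mtopology Y dY) Y"
    using openin_topspace Metric_space.topspace_mtopology[OF mY] by metis
  ultimately show ?thesis
    by (metis compact_imp_locally_compact_space compact_space_def
        Metric_space.topspace_mtopology[OF mY])
qed

end
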